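(* Given integers $d\ge3$ and $2\le j\le d-1$, there exists an empty simplex $\mathcal{P}$ of dimension $d$ with $\mu_{\mathrm{va}}(\mathcal{P})=\mu_{\mathrm{midp}}(\mathcal{P})=\mu_{\mathrm{idp}}(\mathcal{P})=\mu_{\mathrm{Hilb}}(\mathcal{P})=\mu_{\mathrm{hole}}(\mathcal{P})=\mu_{\mathrm{Ehr}}(\mathcal{P})=j$.
   Context: An integral convex polytope is a convex polytope whose vertices lie in $\mathbb{Z}^N$; an empty simplex is an integral simplex whose only lattice points are its vertices; $k\mathcal{P}=\{k\alpha:\alpha\in\mathcal{P}\}$. A polytope $\mathcal{Q}$ has the integer decomposition property (IDP) if for every integer $k\ge 1$ and every $\alpha\in k\mathcal{Q}\cap\mathbb{Z}^N$ there are $\alpha_1,\dots,\alpha_k\in\mathcal{Q}\cap\mathbb{Z}^N$ with $\alpha=\alpha_1+\cdots+\alpha_k$; $\mathcal{Q}$ is very ample if this holds for all sufficiently large $k$. Let $\widetilde{\mathcal{P}}=\{(\alpha,1):\alpha\in\mathcal{P}\}$ and $\mathcal{C}(\mathcal{P})$ the cone generated by the vertices of $\widetilde{\mathcal{P}}$; the degree of $(\alpha,n)$ is $n$. $\mathcal{H}(\mathcal{C}(\mathcal{P}))$ is the minimal Hilbert basis of $\mathcal{C}(\mathcal{P})$. For an empty simplex $\mathcal{S}$ with vertices $v_i$, $\mathrm{Box}(\mathcal{S})=\{\sum_i r_i(v_i,1)\in\mathbb{Z}^{N+1}:0\le r_i<1\}$; $\mathrm{Box}(\mathcal{P})=\bigcup_{\mathcal{S}}\mathrm{Box}(\mathcal{S})\setminus\mathbb{Z}_{\ge0}(\widetilde{\mathcal{P}}\cap\mathbb{Z}^{N+1})$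 over all empty $d$-dimensional simplices $\mathcal{S}\subset\mathcal{P}$, $d=\dim\mathcal{P}$. The $\delta$-vector $(\delta_0,\dots,\delta_d)$ is defined by $\sum_{n\ge0}|n\mathcal{P}\cap\mathbb{Z}^N|t^n=(\sum_i\delta_it^i)/(1-t)^{d+1}$. $\mu_{\mathrm{va}}$ = smallest $k>0$ with $k\mathcal{P}$ very ample; $\mu_{\mathrm{midp}}$ = smallest $k>0$ with $k\mathcal{P}$ having IDP; $\mu_{\mathrm{idp}}$ = smallest $k>0$ with $n\mathcal{P}$ having IDP for all $n\ge k$; $\mu_{\mathrm{Hilb}}$ = maximal degree in $\mathcal{H}(\mathcal{C}(\mathcal{P}))$; $\mu_{\mathrm{hole}}$ = maximal degree in $\mathrm{Box}(\mathcal{P})$ (equal to $1$ if it is empty); $\mu_{\mathrm{Ehr}}$ = largest $i>0$ with $\delta_i\ne0$. *)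

theory Defs
  imports "HOL-Analysis.Analysis" "HOL-Computational_Algebra.Formal_Power_Series"
begin

definition lattice_pt :: "real^'n \<Rightarrow> bool" where
  "lattice_pt x \<longleftrightarrow> (\<forall>i. x $ i \<in> \<int>)"

definition lattice_pts :: "(real^'n) set \<Rightarrow> (real^'n) set" where
  "lattice_pts P = {x \<in> P. lattice_pt x}"

text \<open>Points of the lifted space R^N x R; the last coordinate is the degree.\<close>
definition lattice_pt2 :: "(real^'n) \<times> real \<Rightarrow> bool" where
  "lattice_pt2 z \<longleftrightarrow> lattice_pt (fst z) \<and> snd z \<in> \<int>"

definition deg :: "(real^'n) \<times> real \<Rightarrow> nat" where
  "deg z = nat \<lfloor>snd z\<rfloor>"

definition vertices :: "(real^'n) set \<Rightarrow> (real^'n) set" where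
  "vertices P = {v. v extreme_point_of P}"

definition integral_polytope :: "(real^'n) set \<Rightarrow> bool" where
  "integral_polytope P \<longleftrightarrow> polytope P \<and> P \<noteq> {} \<and> (\<forall>v \<in> vertices P. lattice_pt v)"

definition empty_simplex :: "int \<Rightarrow> (real^'n) set \<Rightarrow> bool" where
  "empty_simplex d S \<longleftrightarrow> integral_polytope S \<and> d simplex S \<and> lattice_pts S = vertices S"

definition dil :: "nat \<Rightarrow> (real^'n) set \<Rightarrow> (real^'n) set" where
  "dil k P = (\<lambda>x. real k *\<^sub>R x) ` P"

fun ksum :: "nat \<Rightarrow> ('a::monoid_add) set \<Rightarrow> 'a set" where
  "ksum 0 A = {0}"
| "ksum (Suc k) A = {a + b | a b. a \<in> A \<and> b \<in> ksum k A}"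

definition decomp_at :: "nat \<Rightarrow> (real^'n) set \<Rightarrow> bool" where
  "decomp_at k Q \<longleftrightarrow> (\<forall>\<alpha> \<in> lattice_pts (dil k Q). \<alpha> \<in> ksum k (lattice_pts Q))"

definition IDP :: "(real^'n) set \<Rightarrow> bool" where
  "IDP Q \<longleftrightarrow> (\<forall>k\<ge>1. decomp_at k Q)"

definition very_ample :: "(real^'n) set \<Rightarrow> bool" where
  "very_ample Q \<longleftrightarrow> (\<exists>k0. \<forall>k\<ge>k0. k \<ge> 1 \<longrightarrow> decomp_at k Q)"

definition mu_va :: "(real^'n) set \<Rightarrow> nat" where
  "mu_va P = (LEAST k. k > 0 \<and> very_ample (dil k P))"

definition mu_midp :: "(real^'n) set \<Rightarrow> nat" where
  "mu_midp P = (LEAST k. k > 0 \<and> IDP (dil k P))"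

definition mu_idp :: "(real^'n) set \<Rightarrow> nat" where
  "mu_idp P = (LEAST k. k > 0 \<and> (\<forall>n\<ge>k. IDP (dil n P)))"

definition cone_of :: "(real^'n) set \<Rightarrow> ((real^'n) \<times> real) set" where
  "cone_of P = {\<Sum>v\<in>F. c v *\<^sub>R (v, 1) | F c. finite F \<and> F \<subseteq> vertices P \<and> (\<forall>v\<in>F. c v \<ge> 0)}"

definition cone_lattice :: "(real^'n) set \<Rightarrow> ((real^'n) \<times> real) set" where
  "cone_lattice P = {z \<in> cone_of P. lattice_pt2 z}"

definition hilb :: "(real^'n) set \<Rightarrow> ((real^'n) \<times> real) set" where
  "hilb P = {z \<in> cone_lattice P. z \<noteq> 0 \<and>
     \<not> (\<exists>x y. x \<in> cone_lattice P \<and> y \<in> cone_lattice P \<and> x \<noteq> 0 \<and> y \<noteq> 0 \<and> z = x + y)}"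

definition mu_Hilb :: "(real^'n) set \<Rightarrow> nat" where
  "mu_Hilb P = Max (deg ` hilb P)"

definition box_simplex :: "(real^'n) set \<Rightarrow> ((real^'n) \<times> real) set" where
  "box_simplex S = {z. lattice_pt2 z \<and> (\<exists>r. (\<forall>v\<in>vertices S. 0 \<le> r v \<and> r v < 1) \<and>
       z = (\<Sum>v\<in>vertices S. r v *\<^sub>R (v, 1)))}"

definition nat_span :: "((real^'n) \<times> real) set \<Rightarrow> ((real^'n) \<times> real) set" where
  "nat_span A = {\<Sum>a\<in>F. real (c a) *\<^sub>R a | F c. finite F \<and> F \<subseteq> A}"

definition box_polytope :: "(real^'n) set \<Rightarrow> ((real^'n) \<times> real) set" where
  "box_polytope P = (\<Union> {box_simplex S | S. S \<subseteq> P \<and> empty_simplex (aff_dim P) S})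
      - nat_span ((\<lambda>x. (x, 1)) ` lattice_pts P)"

definition mu_hole :: "(real^'n) set \<Rightarrow> nat" where
  "mu_hole P = (if box_polytope P = {} then 1 else Max (deg ` box_polytope P))"

definition ehrhart_series :: "(real^'n) set \<Rightarrow> int fps" where
  "ehrhart_series P = Abs_fps (\<lambda>n. int (card (lattice_pts (dil n P))))"

definition delta :: "(real^'n) set \<Rightarrow> nat \<Rightarrow> int" where
  "delta P i = fps_nth (ehrhart_series P * (1 - fps_X) ^ (nat (aff_dim P) + 1)) i"

definition mu_Ehr :: "(real^'n) set \<Rightarrow> nat" where
  "mu_Ehr P = (GREATEST i. i > 0 \<and> delta P i \<noteq> 0)"

end

theory Submission
  imports Defs "HOL-Library.Function_Algebras"
begin

(* The simplex P is spanned by 0, the unit vectors e_i for i \<noteq> a, and w = j e_a - (sum of e_i over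
   i \<in> J), where a \<notin> J and |J| = j.  In barycentric coordinates \<mu>, the point \<Sum>_p \<mu>_p (v_p, 1) of the
   cone over P is a lattice point iff \<mu> \<in> \<int>^(d+1) + \<int> g/j, where g is -1 at the vertex 0, 1 at w and
   at the e_i with i \<in> J, and 0 elsewhere.  Hence the box points are the fractional parts \<beta>_t of
   t g/j for 0 \<le> t < j, of degree t + 1 when t > 0, and every lattice point of the cone is uniquely
   \<beta>_t plus a nonnegative integer vector.  Everything is read off this decomposition: the
   \<delta>-vector is 1 + z^2 + ... + z^j; \<beta>_(j-1) is an irreducible box point of degree j, and larger
   lattice points are reducible; kP has IDP once k \<ge> j, while for k < j the point \<beta>_(j-1) plus
   Kk - j times the unit vector at w lies in (Kk)P but is no sum of lattice points of kP, as its
   coordinate at the vertex 0 is 1/j whereas that of such a sum is an integer or at least 2/j. *)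

lemma sum_UNIV_option:
  "sum f (UNIV :: 'a::finite option set) = f None + (\<Sum>i\<in>UNIV. f (Some i))"
  by (simp add: UNIV_option_conv sum.reindex)

lemma not_Ints_if_between_0_1: "0 < x \<Longrightarrow> x < 1 \<Longrightarrow> (x::real) \<notin> \<int>"
  by (auto elim!: Ints_cases)

lemma of_nat_nat_floor_Ints: "x \<in> \<int> \<Longrightarrow> -1 < x \<Longrightarrow> real (nat \<lfloor>x\<rfloor>) = x"
  by (auto elim!: Ints_cases)

lemma Least_pos_eqI:
  assumes "0 < j" "\<And>k. 0 < k \<Longrightarrow> Q k \<longleftrightarrow> j \<le> k"
  shows "(LEAST k. 0 < k \<and> Q k) = (j::nat)"
  by (rule Least_equality) (use assms in auto)

lemma Max_image_eqI:
  assumes "\<And>z. z \<in> X \<Longrightarrow> f z \<le> (j::nat)" "x \<in> X" "f x = j"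
  shows "Max (f ` X) = j"
proof -
  have "f ` X \<subseteq> {..j}" using assms(1) by auto
  then have "finite (f ` X)" by (rule finite_subset) simp
  then show ?thesis using assms by (intro Max_eqI) auto
qed

lemma ex_fun_le_with_sum:
  fixes q :: "'a::finite \<Rightarrow> nat"
  assumes "r \<le> sum q UNIV"
  shows "\<exists>q'. (\<forall>p. q' p \<le> q p) \<and> sum q' UNIV = r"
  using assms
proof (induction r)
  case 0 then show ?case by (intro exI[of _ "\<lambda>_. 0"]) simp
next
  case (Suc r)
  then obtain q'' where q'': "\<forall>p. q'' p \<le> q p" "sum q'' UNIV = r" by force
  have "\<exists>p. q'' p < q p"
  proof (rule ccontr)
    assume "\<nexists>p. q'' p < q p"
    then have "sum q UNIV \<le> sum q'' UNIV" by (intro sum_mono) (simp add: not_less)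
    then show False using Suc.prems q''(2) by simp
  qed
  then obtain p where p: "q'' p < q p" by blast
  define q' where "q' x = q'' x + (if x = p then 1 else 0)" for x
  have "\<forall>x. q' x \<le> q x" using q''(1) p by (auto simp: q'_def Suc_le_eq)
  moreover have "sum q' UNIV = Suc r" using q''(2) by (simp add: q'_def sum.distrib)
  ultimately show ?case by blast
qed

lemma sum_subset_range_inj:
  fixes g :: "'a::finite \<Rightarrow> 'b"
  assumes "inj g" "F \<subseteq> range g"
  shows "sum f F = (\<Sum>p\<in>UNIV. if g p \<in> F then f (g p) else 0)"
proof -
  have "sum f F = sum f (range g \<inter> F)"
    using assms(2) by (simp add: Int_absorb1)
  also have "\<dots> = (\<Sum>x\<in>range g. if x \<in> F then f x else 0)"
    by (rule sum.inter_restrict) simp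
  also have "\<dots> = (\<Sum>p\<in>UNIV. if g p \<in> F then f (g p) else 0)"
    using assms(1) by (simp add: sum.reindex)
  finally show ?thesis .
qed

lemma IDP_imp_very_ample: "IDP Q \<Longrightarrow> very_ample Q"
  unfolding IDP_def very_ample_def by blast

lemma dil_dil: "dil k (dil n X) = dil (k * n) X"
  by (simp add: dil_def image_image)

lemma ksum_image:
  fixes f :: "'a::monoid_add \<Rightarrow> 'b::monoid_add"
  assumes "\<And>x y. f (x + y) = f x + f y" "f 0 = 0"
  shows "ksum k (f ` A) = f ` ksum k A"
proof (induction k)
  case (Suc k)
  have "ksum (Suc k) (f ` A) = {f x + f y |x y. x \<in> A \<and> y \<in> ksum k A}" using Suc by auto
  also have "\<dots> = f ` ksum (Suc k) A" by (auto simp flip: assms(1))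
  finally show ?case .
qed (use assms(2) in simp)

lemma sum_ksum:
  fixes A :: "('a::finite \<Rightarrow> 'b::comm_semiring_1) set"
  assumes "\<And>x. x \<in> A \<Longrightarrow> sum x UNIV = s" "y \<in> ksum k A"
  shows "sum y UNIV = of_nat k * s"
  using assms(2)
proof (induction k arbitrary: y)
  case (Suc k)
  then obtain x z where "y = x + z" "x \<in> A" "z \<in> ksum k A" by auto
  then show ?case using Suc.IH assms(1) by (simp add: sum.distrib algebra_simps)
qed simp

lemma of_nat_fun_in_ksum:
  fixes q :: "'a::finite \<Rightarrow> nat" and B :: "('a \<Rightarrow> 'b::semiring_1) set"
  assumes "\<And>q. sum q UNIV = n \<Longrightarrow> (\<lambda>p. of_nat (q p)) \<in> B" "sum q UNIV = m * n"
  shows "(\<lambda>p. of_nat (q p)) \<in> ksum m B"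
  using assms(2)
proof (induction m arbitrary: q)
  case 0
  then show ?case by (simp add: zero_fun_def)
next
  case (Suc m)
  obtain q1 where q1: "\<forall>p. q1 p \<le> q p" "sum q1 UNIV = n"
    using ex_fun_le_with_sum[of n q] Suc.prems by auto
  define q2 where "q2 p = q p - q1 p" for p
  have "sum q UNIV = sum q1 UNIV + sum q2 UNIV"
    using q1(1) by (simp add: q2_def flip: sum.distrib)
  then have "(\<lambda>p. of_nat (q2 p)) \<in> ksum m B" using Suc q1(2) by simp
  moreover have "(\<lambda>p. of_nat (q p)) = (\<lambda>p. of_nat (q1 p)) + (\<lambda>p. of_nat (q2 p) :: 'b)"
    using q1(1) by (auto simp: q2_def fun_eq_iff simp flip: of_nat_add)
  ultimately show ?case using assms(1) q1(2) by auto
qed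

lemma card_nat_funs_with_sum:
  "card {q :: 'a::finite \<Rightarrow> nat. sum q UNIV = r} = (r + CARD('a) - 1) choose r"
proof -
  obtain xs :: "'a list" where xs: "set xs = UNIV" "distinct xs"
    using finite_distinct_list[of "UNIV :: 'a set"] by auto
  have lxs: "length xs = CARD('a)"
    using distinct_card[OF xs(2)] xs(1) by simp
  have sum_map: "sum_list (map q xs) = sum q UNIV" for q :: "'a \<Rightarrow> nat"
    using sum.distinct_set_conv_list[OF xs(2), of q] xs(1) by simp
  have "bij_betw (\<lambda>q. map q xs) {q. sum q UNIV = r} {l. length l = CARD('a) \<and> sum_list l = r}"
  proof (rule bij_betw_imageI)
    show "inj_on (\<lambda>q. map q xs) {q. sum q UNIV = r}"
      using xs(1) by (intro inj_onI) (auto simp: map_eq_conv fun_eq_iff)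
    show "(\<lambda>q. map q xs) ` {q. sum q UNIV = r} = {l. length l = CARD('a) \<and> sum_list l = r}"
    proof (intro set_eqI iffI)
      fix l assume l: "l \<in> {l. length l = CARD('a) \<and> sum_list l = r}"
      define q where "q x = l ! (THE i. i < length xs \<and> xs ! i = x)" for x
      have "q (xs ! i) = l ! i" if "i < length xs" for i
        unfolding q_def using that xs(2) by (subst the_equality) (auto simp: nth_eq_iff_index_eq)
      then have "map q xs = l"
        using l lxs by (intro nth_equalityI) auto
      then show "l \<in> (\<lambda>q. map q xs) ` {q. sum q UNIV = r}"
        using l sum_map[of q] by force
    qed (auto simp: lxs sum_map)
  qed
  then show ?thesis by (simp add: bij_betw_same_card card_length_sum_list)
qed

lemma finite_nat_funs_with_sum: "finite {q :: 'a::finite \<Rightarrow> nat. sum q UNIV = r}"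
proof (rule card_ge_0_finite)
  have "0 < CARD('a)" by simp
  then have "r \<le> r + CARD('a) - 1" by linarith
  then show "0 < card {q :: 'a \<Rightarrow> nat. sum q UNIV = r}"
    by (simp add: card_nat_funs_with_sum)
qed

definition fps_neg_binomial :: "nat \<Rightarrow> 'a::comm_ring_1 fps" where
  "fps_neg_binomial D = Abs_fps (\<lambda>n. of_nat ((n + D - 1) choose n))"

lemma fps_neg_binomial_mult_one_minus_X:
  "fps_neg_binomial (Suc D) * (1 - fps_X) = (fps_neg_binomial D :: 'a::comm_ring_1 fps)"
proof (rule fps_ext)
  fix n
  show "fps_nth (fps_neg_binomial (Suc D) * (1 - fps_X)) n = fps_nth (fps_neg_binomial D :: 'a fps) n"
  proof (cases n)
    case (Suc m)
    have "(Suc m + D) choose (Suc m) = ((m + D) choose m) + ((m + D) choose (Suc m))"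
      by (metis add_Suc binomial_Suc_Suc)
    then show ?thesis
      using Suc by (simp add: fps_neg_binomial_def right_diff_distrib fps_mult_fps_X_commute[symmetric])
  qed (simp add: fps_neg_binomial_def right_diff_distrib)
qed

lemma fps_neg_binomial_mult_one_minus_X_power:
  "fps_neg_binomial D * (1 - fps_X) ^ D = (1 :: 'a::comm_ring_1 fps)"
proof (induction D)
  case 0
  show ?case by (rule fps_ext) (simp add: fps_neg_binomial_def binomial_eq_0)
next
  case (Suc D)
  then show ?case
    by (simp add: mult.assoc[symmetric] fps_neg_binomial_mult_one_minus_X
             flip: power_Suc2[of "1 - fps_X" D, unfolded mult.commute[of _ "1 - fps_X"]])
qed

section \<open>The simplex\<close>

locale cyclic_empty_simplex =
  fixes a :: "'n::finite" and J :: "'n set" and j :: nat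
  assumes a_notin_J: "a \<notin> J" and card_J: "card J = j" and two_le_j: "2 \<le> j"
begin

definition apex :: "real^'n" where
  "apex = (\<chi> k. if k = a then real j else if k \<in> J then -1 else 0)"

fun vert :: "'n option \<Rightarrow> real^'n" where
  "vert None = 0"
| "vert (Some i) = (if i = a then apex else axis i 1)"

definition point :: "('n option \<Rightarrow> real) \<Rightarrow> real^'n" where
  "point \<mu> = (\<Sum>p\<in>UNIV. \<mu> p *\<^sub>R vert p)"

lemma j_pos: "0 < real j"
  using two_le_j by simp

lemma point_nth:
  "point \<mu> $ k = (if k = a then real j * \<mu> (Some a)
                  else if k \<in> J then \<mu> (Some k) - \<mu> (Some a) else \<mu> (Some k))"
proof -
  have "point \<mu> $ k = \<mu> (Some a) * apex $ k + (\<Sum>i\<in>UNIV - {a}. \<mu> (Some i) * axis i 1 $ k)"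
    by (simp add: point_def sum_UNIV_option sum.remove[of _ a])
  also have "(\<Sum>i\<in>UNIV - {a}. \<mu> (Some i) * axis i 1 $ k) = (if k = a then 0 else \<mu> (Some k))"
    by (auto simp: axis_def if_distrib sum.delta' cong: if_cong)
  finally show ?thesis using a_notin_J by (auto simp: apex_def)
qed

lemma point_inj:
  assumes "point \<mu> = point \<nu>" "sum \<mu> UNIV = sum \<nu> UNIV"
  shows "\<mu> = \<nu>"
proof -
  have nth: "point \<mu> $ k = point \<nu> $ k" for k
    using assms(1) by simp
  have a: "\<mu> (Some a) = \<nu> (Some a)"
    using nth[of a] j_pos by (simp add: point_nth)
  have some: "\<mu> (Some k) = \<nu> (Some k)" for k
    using nth[of k] a by (auto simp: point_nth split: if_splits)
  then have "\<mu> None = \<nu> None"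
    using assms(2) by (simp add: sum_UNIV_option)
  with some show ?thesis
    by (metis ext not_None_eq)
qed

lemma point_add: "point (\<mu> + \<nu>) = point \<mu> + point \<nu>"
  by (simp add: point_def scaleR_add_left sum.distrib)

lemma point_zero: "point 0 = 0"
  by (simp add: point_def)

lemma point_scale: "point (\<lambda>p. c * \<mu> p) = c *\<^sub>R point \<mu>"
  by (simp add: point_def scaleR_sum_right)

definition unit_weight :: "'n option \<Rightarrow> 'n option \<Rightarrow> real" where
  "unit_weight p = (\<lambda>q. if q = p then 1 else 0)"

lemma point_unit_weight: "point (unit_weight p) = vert p"
proof -
  have "(\<Sum>q\<in>UNIV. unit_weight p q *\<^sub>R vert q) = (\<Sum>q\<in>UNIV. if q = p then vert q else 0)"
    by (rule sum.cong) (auto simp: unit_weight_def)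
  then show ?thesis by (simp add: point_def)
qed

lemma sum_unit_weight: "sum (unit_weight p) UNIV = 1"
  by (simp add: unit_weight_def)

lemma inj_vert: "inj vert"
proof
  fix p p' assume "vert p = vert p'"
  then have "unit_weight p = unit_weight p'"
    by (intro point_inj) (simp_all add: point_unit_weight sum_unit_weight)
  then show "p = p'"
    unfolding unit_weight_def by (metis zero_neq_one)
qed

lemma sum_range_vert: "sum g (range vert) = (\<Sum>p\<in>UNIV. g (vert p))"
  using inj_vert by (simp add: sum.reindex)

lemma affine_independent_range_vert: "\<not> affine_dependent (range vert)"
proof
  assume "affine_dependent (range vert)"
  then obtain U where U: "sum U (range vert) = 0" "\<exists>v\<in>range vert. U v \<noteq> 0"
    "(\<Sum>v\<in>range vert. U v *\<^sub>R v) = 0"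
    using affine_dependent_explicit_finite[of "range vert"] by auto
  have "(\<lambda>p. U (vert p)) = (\<lambda>p. 0)"
    using U(1,3) by (intro point_inj) (simp_all add: point_def sum_range_vert)
  then show False
    using U(2) by (metis image_iff)
qed

definition P :: "(real^'n) set" where
  "P = convex hull (range vert)"

lemma vertices_P: "vertices P = range vert"
  unfolding vertices_def P_def
  using extreme_point_of_convex_hull_affine_independent[OF affine_independent_range_vert] by auto

lemma card_range_vert: "card (range vert) = CARD('n) + 1"
  using inj_vert by (simp add: card_image card_UNIV_option)

lemma simplex_P: "int CARD('n) simplex P"
  unfolding P_def
  by (rule simplex_convex_hull) (simp add: affine_independent_range_vert card_range_vert)

lemma aff_dim_P: "aff_dim P = int CARD('n)"
  using simplex_P aff_dim_simplex by blast

section \<open>Lattice points of the cone in barycentric coordinates\<close>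

definition gen :: "'n option \<Rightarrow> real" where
  "gen p = (case p of None \<Rightarrow> -1 | Some i \<Rightarrow> if i \<in> insert a J then 1 else 0)"

text \<open>The lattice \<int>^(N+1) in barycentric coordinates, see \<open>lattice_pt2_lift_iff\<close>.\<close>
definition lattice_weight :: "('n option \<Rightarrow> real) \<Rightarrow> bool" where
  "lattice_weight \<mu> \<longleftrightarrow> (\<exists>t::int. \<forall>p. \<mu> p - of_int t * gen p / real j \<in> \<int>)"

lemma sum_gen: "sum gen UNIV = real j"
proof -
  have "{i. i = a \<or> i \<in> J} = insert a J" by auto
  moreover have "card (insert a J) = j + 1"
    using a_notin_J card_J two_le_j by (simp add: card_insert_if card_ge_0_finite)
  ultimately show ?thesis
    by (simp add: gen_def sum_UNIV_option sum.If_cases)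
qed

lemma sum_minus_gen_multiple:
  "sum (\<lambda>p. \<mu> p - of_int t * gen p / real j) UNIV = sum \<mu> UNIV - of_int t"
proof -
  have "(\<Sum>p\<in>UNIV. of_int t * gen p / real j) = of_int t"
    using j_pos by (simp add: sum_gen flip: sum_divide_distrib sum_distrib_left)
  then show ?thesis by (simp add: sum_subtractf)
qed

lemma lattice_weight_sum_Ints:
  assumes "lattice_weight \<mu>"
  shows "sum \<mu> UNIV \<in> \<int>"
proof -
  obtain t :: int where "\<And>p. \<mu> p - of_int t * gen p / real j \<in> \<int>"
    using assms lattice_weight_def by blast
  then have "sum \<mu> UNIV - of_int t \<in> \<int>"
    by (auto simp flip: sum_minus_gen_multiple)
  then show ?thesis
    by (simp add: diff_in_Ints_iff_left)
qed

lemma lattice_pt_point_if_lattice_weight: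
  assumes "lattice_weight \<mu>"
  shows "lattice_pt (point \<mu>)"
proof -
  obtain t :: int where Z: "\<And>p. \<mu> p - of_int t * gen p / real j \<in> \<int>"
    using assms lattice_weight_def by blast
  define f where "f p = \<mu> p - of_int t * gen p / real j" for p
  have "point \<mu> $ k = (if k = a then real j * f (Some a) + of_int t
                        else if k \<in> J then f (Some k) - f (Some a) else f (Some k))" for k
    using j_pos a_notin_J by (simp add: point_nth f_def gen_def field_simps)
  then show ?thesis
    using Z by (simp add: lattice_pt_def f_def)
qed

lemma lattice_weight_if_lattice_pt_point:
  assumes "lattice_pt (point \<mu>)" "sum \<mu> UNIV \<in> \<int>"
  shows "lattice_weight \<mu>"
proof -
  have Z: "point \<mu> $ k \<in> \<int>" for k
    using assms(1) lattice_pt_def by blast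
  define t where "t = \<lfloor>point \<mu> $ a\<rfloor>"
  have t: "of_int t = real j * \<mu> (Some a)"
    using Z[of a] by (simp add: t_def point_nth)
  define f where "f p = \<mu> p - of_int t * gen p / real j" for p
  have some: "f (Some i) \<in> \<int>" for i
  proof -
    have "f (Some i) = (if i = a then 0 else point \<mu> $ i)"
      using t j_pos a_notin_J by (auto simp: f_def gen_def point_nth)
    then show ?thesis using Z by simp
  qed
  have "sum f UNIV \<in> \<int>"
    using assms(2) by (simp add: f_def sum_minus_gen_multiple)
  then have "f None \<in> \<int>"
    using some by (simp add: sum_UNIV_option Ints_sum)
  then have "\<forall>p. f p \<in> \<int>"
    using some by (metis not_None_eq)
  then show ?thesis
    unfolding lattice_weight_def f_def by blast
qed

lemma lattice_pt_point_iff: "sum \<mu> UNIV \<in> \<int> \<Longrightarrow> lattice_pt (point \<mu>) \<longleftrightarrow> lattice_weight \<mu>"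
  using lattice_pt_point_if_lattice_weight lattice_weight_if_lattice_pt_point by blast

text \<open>The fractional part of \<open>t * gen / j\<close>; it is a box point of degree \<open>box_deg t\<close>.\<close>
definition box_weight :: "nat \<Rightarrow> 'n option \<Rightarrow> real" where
  "box_weight t p = (case p of None \<Rightarrow> if t = 0 then 0 else (real j - real t) / real j
                    | Some i \<Rightarrow> if i \<in> insert a J then real t / real j else 0)"

definition box_deg :: "nat \<Rightarrow> nat" where
  "box_deg t = (if t = 0 then 0 else t + 1)"

lemma box_weight_0 [simp]: "box_weight 0 = 0"
  by (auto simp: box_weight_def fun_eq_iff split: option.splits)

lemma box_weight_neq_0: "0 < t \<Longrightarrow> box_weight t \<noteq> 0"
proof
  assume "0 < t" "box_weight t = 0"
  then have "box_weight t (Some a) = 0" by simp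
  then show False using \<open>0 < t\<close> j_pos by (simp add: box_weight_def)
qed

lemma box_weight_nonneg: "t \<le> j \<Longrightarrow> 0 \<le> box_weight t p"
  by (cases p) (auto simp: box_weight_def)

lemma box_weight_less_1: "t < j \<Longrightarrow> box_weight t p < 1"
  using j_pos by (cases p) (auto simp: box_weight_def divide_less_eq)

lemma box_deg_le: "t < j \<Longrightarrow> box_deg t \<le> j"
  by (simp add: box_deg_def)

lemma sum_box_weight: "sum (box_weight t) UNIV = real (box_deg t)"
proof (cases "t = 0")
  case False
  have "(\<Sum>i\<in>UNIV. box_weight t (Some i)) = real t / real j * sum gen (range Some)"
    by (simp add: box_weight_def gen_def sum_distrib_left if_distrib sum.reindex cong: if_cong)
  moreover have "sum gen (range Some) = real j + 1"
    using sum_gen by (simp add: sum_UNIV_option sum.reindex gen_def)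
  ultimately show ?thesis
    using j_pos False by (simp add: sum_UNIV_option box_deg_def box_weight_def field_simps)
qed (simp add: box_deg_def)

lemma box_weight_minus_gen_multiple_Ints: "box_weight t p - real t * gen p / real j \<in> \<int>"
  using j_pos by (cases p) (auto simp: box_weight_def gen_def field_simps)

lemma lattice_weight_box_plus_nat: "lattice_weight (\<lambda>p. box_weight t p + real (q p))"
  unfolding lattice_weight_def
proof (intro exI allI)
  fix p
  have "box_weight t p - real t * gen p / real j + real (q p) \<in> \<int>"
    using box_weight_minus_gen_multiple_Ints by simp
  then show "box_weight t p + real (q p) - of_int (int t) * gen p / real j \<in> \<int>"
    by (simp add: algebra_simps)
qed

lemma gen_multiple_minus_box_weight_Ints:
  "of_int s * gen p / real j - box_weight (nat (s mod int j)) p \<in> \<int>"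
proof -
  define t where "t = nat (s mod int j)"
  have "int t = s mod int j"
    using two_le_j by (simp add: t_def)
  then have "s = int j * (s div int j) + int t"
    by simp
  then have "of_int s = real j * of_int (s div int j) + real t"
    by (metis of_int_add of_int_mult of_int_of_nat_eq)
  then have "of_int s * gen p / real j - box_weight t p
      = of_int (s div int j) * gen p - (box_weight t p - real t * gen p / real j)"
    using j_pos by (simp add: field_simps)
  moreover have "gen p \<in> \<int>"
    by (simp add: gen_def split: option.splits)
  ultimately show ?thesis
    using box_weight_minus_gen_multiple_Ints[of t p] unfolding t_def by (metis Ints_diff Ints_mult Ints_of_int)
qed

definition cone_weights :: "('n option \<Rightarrow> real) set" where
  "cone_weights = {\<mu>. (\<forall>p. 0 \<le> \<mu> p) \<and> lattice_weight \<mu>}"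

definition lattice_weights :: "nat \<Rightarrow> ('n option \<Rightarrow> real) set" where
  "lattice_weights n = {\<mu> \<in> cone_weights. sum \<mu> UNIV = real n}"

lemma cone_weight_decomp:
  assumes "\<mu> \<in> cone_weights"
  obtains t q where "t < j" "\<mu> = (\<lambda>p. box_weight t p + real (q p))"
proof -
  obtain s :: int where s: "\<And>p. \<mu> p - of_int s * gen p / real j \<in> \<int>"
    using assms by (auto simp: cone_weights_def lattice_weight_def)
  define t where "t = nat (s mod int j)"
  have "t < j"
    using two_le_j by (simp add: t_def nat_less_iff)
  have Z: "\<mu> p - box_weight t p \<in> \<int>" for p
    using Ints_add[OF s[of p] gen_multiple_minus_box_weight_Ints[of s p]] by (simp add: t_def)
  have "\<mu> p - box_weight t p > -1" for p
    using assms box_weight_less_1[OF \<open>t < j\<close>, of p] by (simp add: cone_weights_def) (smt (verit))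
  then have "\<mu> = (\<lambda>p. box_weight t p + real (nat \<lfloor>\<mu> p - box_weight t p\<rfloor>))"
    using Z by (simp add: of_nat_nat_floor_Ints)
  with \<open>t < j\<close> show thesis by (rule that)
qed

lemma box_decomp_unique:
  assumes "t < j" "t' < j" "(\<lambda>p. box_weight t p + real (q p)) = (\<lambda>p. box_weight t' p + real (q' p))"
  shows "t = t'" "q = q'"
proof -
  have "real t / real j + real (q (Some a)) = real t' / real j + real (q' (Some a))"
    using fun_cong[OF assms(3), of "Some a"] by (simp add: box_weight_def)
  then have "real (t + j * q (Some a)) = real (t' + j * q' (Some a))"
    using j_pos by (simp add: field_simps)
  then have "t + j * q (Some a) = t' + j * q' (Some a)"
    by (simp only: of_nat_eq_iff)
  then have "(t + j * q (Some a)) mod j = (t' + j * q' (Some a)) mod j"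
    by simp
  then show "t = t'"
    using assms(1,2) by simp
  show "q = q'"
  proof
    fix p
    show "q p = q' p"
      using fun_cong[OF assms(3), of p] \<open>t = t'\<close> by simp
  qed
qed

lemma sum_box_plus_nat:
  "sum (\<lambda>p. box_weight t p + real (q p)) UNIV = real (box_deg t + sum q UNIV)"
  by (simp add: sum.distrib sum_box_weight)

lemma box_plus_nat_in_cone_weights: "t < j \<Longrightarrow> (\<lambda>p. box_weight t p + real (q p)) \<in> cone_weights"
  using box_weight_nonneg[of t] lattice_weight_box_plus_nat by (simp add: cone_weights_def add_nonneg_nonneg)

lemma box_plus_nat_in_lattice_weights:
  "t < j \<Longrightarrow> (\<lambda>p. box_weight t p + real (q p)) \<in> lattice_weights (box_deg t + sum q UNIV)"
  using box_plus_nat_in_cone_weights sum_box_plus_nat by (simp add: lattice_weights_def)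

lemma nat_in_lattice_weights: "(\<lambda>p. real (q p)) \<in> lattice_weights (sum q UNIV)"
  using box_plus_nat_in_lattice_weights[of 0 q] two_le_j by (simp add: box_deg_def)

lemma lattice_weights_decomp:
  assumes "\<mu> \<in> lattice_weights n"
  obtains t q where "t < j" "\<mu> = (\<lambda>p. box_weight t p + real (q p))" "n = box_deg t + sum q UNIV"
proof -
  obtain t q where tq: "t < j" "\<mu> = (\<lambda>p. box_weight t p + real (q p))"
    using assms cone_weight_decomp by (auto simp: lattice_weights_def)
  then have "real n = real (box_deg t + sum q UNIV)"
    using assms sum_box_plus_nat by (simp add: lattice_weights_def)
  with tq show thesis
    using that of_nat_eq_iff by blast
qed

definition weights :: "real \<Rightarrow> ('n option \<Rightarrow> real) set" where
  "weights s = {\<mu>. (\<forall>p. 0 \<le> \<mu> p) \<and> sum \<mu> UNIV = s}"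

lemma P_eq_point_image: "P = point ` weights 1"
proof -
  have "P = {y. \<exists>u. (\<forall>x\<in>range vert. 0 \<le> u x) \<and> sum u (range vert) = 1 \<and> (\<Sum>x\<in>range vert. u x *\<^sub>R x) = y}"
    unfolding P_def by (rule convex_hull_finite) simp
  also have "\<dots> = point ` weights 1"
  proof (intro set_eqI iffI)
    fix y
    assume "y \<in> {y. \<exists>u. (\<forall>x\<in>range vert. 0 \<le> u x) \<and> sum u (range vert) = 1 \<and> (\<Sum>x\<in>range vert. u x *\<^sub>R x) = y}"
    then obtain u where "\<forall>x\<in>range vert. 0 \<le> u x" "sum u (range vert) = 1" "(\<Sum>x\<in>range vert. u x *\<^sub>R x) = y"
      by blast
    then have "(\<lambda>p. u (vert p)) \<in> weights 1" "y = point (\<lambda>p. u (vert p))"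
      by (simp_all add: weights_def sum_range_vert point_def)
    then show "y \<in> point ` weights 1" by blast
  next
    fix y assume "y \<in> point ` weights 1"
    then obtain \<mu> where \<mu>: "\<mu> \<in> weights 1" "y = point \<mu>" by blast
    define u where "u x = \<mu> (inv vert x)" for x
    have "u (vert p) = \<mu> p" for p
      using inj_vert by (simp add: u_def)
    with \<mu> show "y \<in> {y. \<exists>u. (\<forall>x\<in>range vert. 0 \<le> u x) \<and> sum u (range vert) = 1 \<and> (\<Sum>x\<in>range vert. u x *\<^sub>R x) = y}"
      by (intro CollectI exI[of _ u]) (auto simp: sum_range_vert weights_def point_def)
  qed
  finally show ?thesis .
qed

lemma dil_P: "dil s P = point ` weights (real s)"
proof (cases "s = 0")
  case True
  have "weights 0 = {0}"
    by (auto simp: weights_def sum_nonneg_eq_0_iff)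
  moreover have "P \<noteq> {}"
    by (simp add: P_def)
  ultimately show ?thesis
    using True by (auto simp: dil_def point_zero)
next
  case False
  have "weights (real s) = (\<lambda>\<mu> p. real s * \<mu> p) ` weights 1"
  proof (intro set_eqI iffI)
    fix \<nu> assume "\<nu> \<in> weights (real s)"
    show "\<nu> \<in> (\<lambda>\<mu> p. real s * \<mu> p) ` weights 1"
    proof (rule image_eqI)
      show "(\<lambda>p. \<nu> p / real s) \<in> weights 1"
        using \<open>\<nu> \<in> weights (real s)\<close> False by (auto simp: weights_def simp flip: sum_divide_distrib)
    qed (use False in auto)
  qed (auto simp: weights_def simp flip: sum_distrib_left)
  then show ?thesis
    by (simp add: dil_def P_eq_point_image image_image point_scale)
qed

lemma lattice_pts_dil_P: "lattice_pts (dil n P) = point ` lattice_weights n"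
proof -
  have "\<mu> \<in> weights (real n) \<and> lattice_pt (point \<mu>) \<longleftrightarrow> \<mu> \<in> lattice_weights n" for \<mu>
    using lattice_pt_point_iff[of \<mu>] by (auto simp: weights_def lattice_weights_def cone_weights_def)
  then show ?thesis
    unfolding lattice_pts_def dil_P by blast
qed

lemma lattice_weights_1: "lattice_weights 1 = range unit_weight"
proof (intro set_eqI iffI)
  fix \<mu> assume "\<mu> \<in> lattice_weights 1"
  then obtain t q where tq: "t < j" "\<mu> = (\<lambda>p. box_weight t p + real (q p))" "1 = box_deg t + sum q UNIV"
    by (rule lattice_weights_decomp)
  have "box_deg t \<le> 1"
    using tq(3) by linarith
  then have "t = 0"
    by (simp add: box_deg_def split: if_splits)
  then have "sum q UNIV = 1"
    using tq(3) by (simp add: box_deg_def)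
  then obtain p where "q p = 1" "\<forall>r. p \<noteq> r \<longrightarrow> q r = 0"
    using sum_eq_1_iff[of UNIV q, OF finite] by blast
  then have "q = (\<lambda>r. if r = p then 1 else 0)"
    by auto
  then have "\<mu> = unit_weight p"
    using tq(2) \<open>t = 0\<close> by (simp add: unit_weight_def fun_eq_iff)
  then show "\<mu> \<in> range unit_weight" by blast
next
  fix \<mu> assume "\<mu> \<in> range unit_weight"
  then obtain p where "\<mu> = unit_weight p" by blast
  moreover have "unit_weight p = (\<lambda>r. real (if r = p then 1 else 0))"
    by (auto simp: unit_weight_def)
  ultimately show "\<mu> \<in> lattice_weights 1"
    using nat_in_lattice_weights[of "\<lambda>r. if r = p then 1 else 0"] by simp
qed

lemma lattice_pts_P: "lattice_pts P = range vert"
proof -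
  have "dil 1 P = P"
    by (simp add: dil_def)
  then have "lattice_pts P = point ` range unit_weight"
    using lattice_pts_dil_P[of 1] by (simp only: lattice_weights_1)
  then show ?thesis
    by (simp add: image_image point_unit_weight)
qed

lemma empty_simplex_P: "empty_simplex (int CARD('n)) P"
  unfolding empty_simplex_def integral_polytope_def
  using simplex_P simplex_imp_polytope[OF simplex_P] vertices_P lattice_pts_P
  by (auto simp: P_def lattice_pts_def)

definition lift :: "('n option \<Rightarrow> real) \<Rightarrow> (real^'n) \<times> real" where
  "lift \<mu> = (point \<mu>, sum \<mu> UNIV)"

lemma lift_eq_sum: "lift \<mu> = (\<Sum>p\<in>UNIV. \<mu> p *\<^sub>R (vert p, 1))"
  by (simp add: lift_def point_def prod_eq_iff fst_sum snd_sum)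

lemma lift_inj: "lift \<mu> = lift \<nu> \<Longrightarrow> \<mu> = \<nu>"
  unfolding lift_def using point_inj by auto

lemma lift_add: "lift (\<mu> + \<nu>) = lift \<mu> + lift \<nu>"
  by (simp add: lift_def point_add sum.distrib)

lemma lift_eq_0_iff: "lift \<mu> = 0 \<longleftrightarrow> \<mu> = 0"
proof -
  have "lift 0 = 0" by (simp add: lift_def point_zero zero_prod_def)
  then show ?thesis using lift_inj by metis
qed

lemma deg_lift: "deg (lift \<mu>) = nat \<lfloor>sum \<mu> UNIV\<rfloor>"
  by (simp add: deg_def lift_def)

lemma lattice_pt2_lift_iff: "lattice_pt2 (lift \<mu>) \<longleftrightarrow> lattice_weight \<mu>"
  unfolding lattice_pt2_def lift_def using lattice_pt_point_iff lattice_weight_sum_Ints by auto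

section \<open>Hilbert basis and box points\<close>

lemma cone_of_P: "cone_of P = lift ` {\<mu>. \<forall>p. 0 \<le> \<mu> p}"
proof (intro set_eqI iffI)
  fix z assume "z \<in> cone_of P"
  then obtain F c where Fc: "z = (\<Sum>v\<in>F. c v *\<^sub>R (v, 1))" "F \<subseteq> range vert" "\<forall>v\<in>F. c v \<ge> 0"
    unfolding cone_of_def vertices_P by blast
  define \<mu> where "\<mu> p = (if vert p \<in> F then c (vert p) else 0)" for p
  have "z = (\<Sum>p\<in>UNIV. if vert p \<in> F then c (vert p) *\<^sub>R (vert p, 1) else 0)"
    unfolding Fc(1) by (rule sum_subset_range_inj[OF inj_vert Fc(2)])
  also have "\<dots> = lift \<mu>"
    unfolding lift_eq_sum by (rule sum.cong) (auto simp: \<mu>_def zero_prod_def)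
  finally show "z \<in> lift ` {\<mu>. \<forall>p. 0 \<le> \<mu> p}"
    using Fc(3) by (auto simp: \<mu>_def)
next
  fix z assume "z \<in> lift ` {\<mu>. \<forall>p. 0 \<le> \<mu> p}"
  then obtain \<mu> where \<mu>: "\<forall>p. 0 \<le> \<mu> p" "z = lift \<mu>" by blast
  define c where "c x = \<mu> (inv vert x)" for x
  have c: "c (vert p) = \<mu> p" for p
    using inj_vert by (simp add: c_def)
  have "z = (\<Sum>v\<in>range vert. c v *\<^sub>R (v, 1))"
    using \<mu>(2) by (simp add: lift_eq_sum sum_range_vert c)
  moreover have "\<forall>v\<in>range vert. c v \<ge> 0"
    using \<mu>(1) by (auto simp: c)
  ultimately show "z \<in> cone_of P"
    unfolding cone_of_def vertices_P by (intro CollectI exI[of _ "range vert"] exI[of _ c]) auto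
qed

lemma cone_lattice_P: "cone_lattice P = lift ` cone_weights"
  unfolding cone_lattice_def cone_of_P using lattice_pt2_lift_iff by (auto simp: cone_weights_def)

lemma hilb_P:
  "hilb P = lift ` {\<mu> \<in> cone_weights. \<mu> \<noteq> 0 \<and>
                      (\<forall>\<nu>\<in>cone_weights. \<forall>\<rho>\<in>cone_weights. \<mu> = \<nu> + \<rho> \<longrightarrow> \<nu> = 0 \<or> \<rho> = 0)}"
proof (intro set_eqI iffI)
  fix z assume z: "z \<in> hilb P"
  then obtain \<mu> where \<mu>: "\<mu> \<in> cone_weights" "z = lift \<mu>"
    by (auto simp: hilb_def cone_lattice_P)
  have "\<nu> = 0 \<or> \<rho> = 0" if "\<nu> \<in> cone_weights" "\<rho> \<in> cone_weights" "\<mu> = \<nu> + \<rho>" for \<nu> \<rho>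
    using z \<mu> that by (auto simp: hilb_def cone_lattice_P lift_add lift_eq_0_iff)
  moreover have "\<mu> \<noteq> 0"
    using z \<mu>(2) by (auto simp: hilb_def lift_eq_0_iff)
  ultimately show "z \<in> lift ` {\<mu> \<in> cone_weights. \<mu> \<noteq> 0 \<and>
      (\<forall>\<nu>\<in>cone_weights. \<forall>\<rho>\<in>cone_weights. \<mu> = \<nu> + \<rho> \<longrightarrow> \<nu> = 0 \<or> \<rho> = 0)}"
    using \<mu> by blast
next
  fix z assume "z \<in> lift ` {\<mu> \<in> cone_weights. \<mu> \<noteq> 0 \<and>
      (\<forall>\<nu>\<in>cone_weights. \<forall>\<rho>\<in>cone_weights. \<mu> = \<nu> + \<rho> \<longrightarrow> \<nu> = 0 \<or> \<rho> = 0)}"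
  then obtain \<mu> where \<mu>: "\<mu> \<in> cone_weights" "\<mu> \<noteq> 0" "z = lift \<mu>"
    and irr: "\<And>\<nu> \<rho>. \<nu> \<in> cone_weights \<Longrightarrow> \<rho> \<in> cone_weights \<Longrightarrow> \<mu> = \<nu> + \<rho> \<Longrightarrow> \<nu> = 0 \<or> \<rho> = 0"
    by blast
  have "\<mu> = \<nu> + \<rho>" if "lift \<mu> = lift \<nu> + lift \<rho>" for \<nu> \<rho>
    using that by (simp add: lift_inj flip: lift_add)
  then show "z \<in> hilb P"
    unfolding hilb_def cone_lattice_P using \<mu> irr by (auto simp: lift_eq_0_iff)
qed

lemma small_cone_weight_is_box_weight:
  assumes "\<mu> \<in> cone_weights" "\<And>p. \<mu> p < 1"
  obtains t where "t < j" "\<mu> = box_weight t"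
proof -
  obtain t q where tq: "t < j" "\<mu> = (\<lambda>p. box_weight t p + real (q p))"
    using assms(1) by (rule cone_weight_decomp)
  have "q p = 0" for p
    using assms(2)[of p] box_weight_nonneg[of t p] tq by simp
  with tq show thesis
    using that by auto
qed

lemma reducible_if_sum_gt:
  assumes "\<mu> \<in> cone_weights" "real j < sum \<mu> UNIV"
  obtains \<nu> \<rho> where "\<nu> \<in> cone_weights" "\<rho> \<in> cone_weights" "\<nu> \<noteq> 0" "\<rho> \<noteq> 0" "\<mu> = \<nu> + \<rho>"
proof -
  obtain t q where tq: "t < j" "\<mu> = (\<lambda>p. box_weight t p + real (q p))"
    using assms(1) by (rule cone_weight_decomp)
  have sum_q: "j < box_deg t + sum q UNIV"
    using assms(2) by (simp only: tq(2) sum_box_plus_nat of_nat_less_iff)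
  then obtain p0 where p0: "q p0 \<noteq> 0"
    using box_deg_le[OF tq(1)] by (metis add.right_neutral not_less sum.neutral)
  show thesis
  proof (cases "t = 0")
    case False
    have "(\<lambda>p. real (q p)) \<in> cone_weights" "(\<lambda>p. real (q p)) \<noteq> 0"
      using box_plus_nat_in_cone_weights[of 0 q] two_le_j p0 by (auto simp: fun_eq_iff)
    moreover have "\<mu> = box_weight t + (\<lambda>p. real (q p))"
      using tq by auto
    ultimately show thesis
      using that box_plus_nat_in_cone_weights[OF tq(1), of "\<lambda>_. 0"] box_weight_neq_0 False by auto
  next
    case True
    define q' where "q' = q(p0 := q p0 - 1)"
    have "sum q UNIV = q p0 + sum q' (UNIV - {p0})"
      by (simp add: sum.remove q'_def)
    moreover have "sum q' UNIV = q' p0 + sum q' (UNIV - {p0})"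
      by (simp add: sum.remove)
    ultimately have "sum q' UNIV \<noteq> 0"
      using sum_q True two_le_j p0 by (simp add: box_deg_def q'_def)
    then obtain p1 where "q' p1 \<noteq> 0"
      by (metis (mono_tags) sum.neutral)
    then have "(\<lambda>p. real (q' p)) \<noteq> 0"
      by (metis of_nat_eq_0_iff zero_fun_def)
    moreover have "\<mu> = unit_weight p0 + (\<lambda>p. real (q' p))"
      using tq True p0 by (auto simp: q'_def unit_weight_def fun_eq_iff of_nat_diff)
    moreover have "unit_weight p0 \<in> cone_weights" "unit_weight p0 \<noteq> 0"
      using lattice_weights_1 by (auto simp: lattice_weights_def unit_weight_def fun_eq_iff)
    ultimately show thesis
      using that box_plus_nat_in_cone_weights[of 0 q'] two_le_j by auto
  qed
qed

lemma box_weight_irreducible: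
  assumes "0 < t" "t < j" "\<nu> \<in> cone_weights" "\<rho> \<in> cone_weights" "box_weight t = \<nu> + \<rho>"
  shows "\<nu> = 0 \<or> \<rho> = 0"
proof (rule ccontr)
  assume nz: "\<not> (\<nu> = 0 \<or> \<rho> = 0)"
  have sum: "box_weight t p = \<nu> p + \<rho> p" for p
    using assms(5) by simp
  have "0 \<le> \<nu> p" "0 \<le> \<rho> p" for p
    using assms(3,4) by (simp_all add: cone_weights_def)
  then have small: "\<nu> p < 1" "\<rho> p < 1" for p
    using sum[of p] box_weight_less_1[OF assms(2), of p] by (smt (verit))+
  obtain t1 where "t1 < j" "\<nu> = box_weight t1"
    using assms(3) small(1) by (rule small_cone_weight_is_box_weight)
  moreover obtain t2 where "t2 < j" "\<rho> = box_weight t2"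
    using assms(4) small(2) by (rule small_cone_weight_is_box_weight)
  moreover have "t1 \<noteq> 0" "t2 \<noteq> 0"
    using nz calculation by auto
  ultimately have "box_weight t (Some a) + box_weight t None
      = box_weight t1 (Some a) + box_weight t1 None + (box_weight t2 (Some a) + box_weight t2 None)"
    using sum by simp
  then show False
    using assms(1) \<open>t1 \<noteq> 0\<close> \<open>t2 \<noteq> 0\<close> j_pos by (simp add: box_weight_def field_simps)
qed

lemma lift_box_weight_in_hilb_P: "0 < t \<Longrightarrow> t < j \<Longrightarrow> lift (box_weight t) \<in> hilb P"
  unfolding hilb_P
  using box_plus_nat_in_cone_weights[of t "\<lambda>_. 0"] box_weight_neq_0 box_weight_irreducible
  by auto

lemma deg_lift_box_weight: "deg (lift (box_weight t)) = box_deg t"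
  by (simp add: deg_lift sum_box_weight)

lemma deg_le_of_mem_hilb_P:
  assumes "z \<in> hilb P"
  shows "deg z \<le> j"
proof -
  obtain \<mu> where \<mu>: "\<mu> \<in> cone_weights" "z = lift \<mu>"
    and irr: "\<And>\<nu> \<rho>. \<nu> \<in> cone_weights \<Longrightarrow> \<rho> \<in> cone_weights \<Longrightarrow> \<mu> = \<nu> + \<rho> \<Longrightarrow> \<nu> = 0 \<or> \<rho> = 0"
    using assms unfolding hilb_P by blast
  have "sum \<mu> UNIV \<le> real j"
  proof (rule ccontr)
    assume "\<not> sum \<mu> UNIV \<le> real j"
    then have "real j < sum \<mu> UNIV" by simp
    with \<mu>(1) obtain \<nu> \<rho> where "\<nu> \<in> cone_weights" "\<rho> \<in> cone_weights" "\<nu> \<noteq> 0" "\<rho> \<noteq> 0" "\<mu> = \<nu> + \<rho>"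
      by (rule reducible_if_sum_gt)
    then show False
      using irr by blast
  qed
  then show ?thesis
    using \<mu>(2) by (simp add: deg_lift nat_le_iff floor_le_iff)
qed

lemma mu_Hilb_P: "mu_Hilb P = j"
  unfolding mu_Hilb_def
proof (rule Max_image_eqI)
  show "lift (box_weight (j - 1)) \<in> hilb P"
    using two_le_j by (intro lift_box_weight_in_hilb_P) auto
  show "deg (lift (box_weight (j - 1))) = j"
    using two_le_j by (simp add: deg_lift_box_weight box_deg_def)
qed (rule deg_le_of_mem_hilb_P)

lemma vertices_full_dim_subsimplex:
  assumes "S \<subseteq> P" "empty_simplex (aff_dim P) S"
  shows "vertices S = range vert"
proof -
  obtain C where C: "\<not> affine_dependent C" "int (card C) = int CARD('n) + 1" "S = convex hull C"
    using assms(2) aff_dim_P by (auto simp: empty_simplex_def simplex_def)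
  have vertices_S: "vertices S = C"
    unfolding vertices_def C(3) using extreme_point_of_convex_hull_affine_independent[OF C(1)] by auto
  have "lattice_pts S \<subseteq> lattice_pts P"
    using assms(1) by (auto simp: lattice_pts_def)
  then have "C \<subseteq> range vert"
    using assms(2) vertices_S lattice_pts_P by (auto simp: empty_simplex_def)
  moreover have "card C = card (range vert)"
    using C(2) card_range_vert by simp
  ultimately have "C = range vert"
    using card_subset_eq[of "range vert" C] by simp
  then show ?thesis
    using vertices_S by simp
qed

lemma small_cone_weights_eq: "{\<mu> \<in> cone_weights. \<forall>p. \<mu> p < 1} = box_weight ` {..<j}"
proof (intro set_eqI iffI)
  fix \<mu> assume "\<mu> \<in> {\<mu> \<in> cone_weights. \<forall>p. \<mu> p < 1}"
  then have "\<mu> \<in> cone_weights" "\<And>p. \<mu> p < 1"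
    by auto
  then obtain t where "t < j" "\<mu> = box_weight t"
    by (rule small_cone_weight_is_box_weight)
  then show "\<mu> \<in> box_weight ` {..<j}" by blast
qed (use box_plus_nat_in_cone_weights[of _ "\<lambda>_. 0"] box_weight_less_1 in auto)

lemma box_simplex_eq_lift_small_cone_weights:
  assumes "vertices S = range vert"
  shows "box_simplex S = lift ` {\<mu> \<in> cone_weights. \<forall>p. \<mu> p < 1}"
proof (intro set_eqI iffI)
  fix z assume "z \<in> box_simplex S"
  then obtain r where r: "lattice_pt2 z" "\<forall>v\<in>range vert. 0 \<le> r v \<and> r v < 1"
      "z = (\<Sum>v\<in>range vert. r v *\<^sub>R (v, 1))"
    unfolding box_simplex_def assms by blast
  then have "z = lift (\<lambda>p. r (vert p))"
    by (simp add: sum_range_vert lift_eq_sum)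
  then show "z \<in> lift ` {\<mu> \<in> cone_weights. \<forall>p. \<mu> p < 1}"
    using r(1,2) lattice_pt2_lift_iff by (auto simp: cone_weights_def)
next
  fix z assume "z \<in> lift ` {\<mu> \<in> cone_weights. \<forall>p. \<mu> p < 1}"
  then obtain \<mu> where \<mu>: "\<mu> \<in> cone_weights" "\<forall>p. \<mu> p < 1" "z = lift \<mu>" by blast
  define r where "r x = \<mu> (inv vert x)" for x
  have r: "r (vert p) = \<mu> p" for p
    using inj_vert by (simp add: r_def)
  have "z = (\<Sum>v\<in>range vert. r v *\<^sub>R (v, 1))"
    using \<mu>(3) by (simp add: sum_range_vert r lift_eq_sum)
  moreover have "\<forall>v\<in>range vert. 0 \<le> r v \<and> r v < 1"
    using \<mu>(1,2) by (auto simp: r cone_weights_def)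
  moreover have "lattice_pt2 z"
    using \<mu> lattice_pt2_lift_iff by (simp add: cone_weights_def)
  ultimately show "z \<in> box_simplex S"
    unfolding box_simplex_def assms by blast
qed

lemma box_simplex_of_vertices:
  "vertices S = range vert \<Longrightarrow> box_simplex S = (\<lambda>t. lift (box_weight t)) ` {..<j}"
  by (simp add: box_simplex_eq_lift_small_cone_weights small_cone_weights_eq image_image)

lemma lift_box_weight_notin_nat_span:
  assumes "0 < t" "t < j"
  shows "lift (box_weight t) \<notin> nat_span ((\<lambda>x. (x, 1)) ` lattice_pts P)"
proof
  assume "lift (box_weight t) \<in> nat_span ((\<lambda>x. (x, 1)) ` lattice_pts P)"
  then obtain F c where F: "lift (box_weight t) = (\<Sum>x\<in>F. real (c x) *\<^sub>R x)"
      "F \<subseteq> range (\<lambda>p. (vert p, 1::real))"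
    unfolding nat_span_def lattice_pts_P image_image by blast
  define g where "g p = (vert p, 1::real)" for p
  have "inj g"
    using inj_vert by (auto simp: inj_def g_def)
  define \<nu> where "\<nu> p = (if g p \<in> F then real (c (g p)) else 0)" for p
  have "(\<Sum>x\<in>F. real (c x) *\<^sub>R x) = (\<Sum>p\<in>UNIV. if g p \<in> F then real (c (g p)) *\<^sub>R g p else 0)"
    using F(2) by (intro sum_subset_range_inj[OF \<open>inj g\<close>]) (simp add: g_def)
  also have "\<dots> = lift \<nu>"
    unfolding lift_eq_sum by (rule sum.cong) (auto simp: \<nu>_def g_def zero_prod_def)
  finally have "box_weight t = \<nu>"
    using F(1) lift_inj by simp
  moreover have "\<nu> (Some a) \<in> \<int>"
    by (simp add: \<nu>_def)
  ultimately have "box_weight t (Some a) \<in> \<int>"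
    by simp
  then have "real t / real j \<in> \<int>"
    by (simp add: box_weight_def)
  then show False
    using assms by (simp add: not_Ints_if_between_0_1)
qed

lemma deg_le_of_mem_box_polytope_P:
  assumes "z \<in> box_polytope P"
  shows "deg z \<le> j"
proof -
  obtain S where S: "S \<subseteq> P" "empty_simplex (aff_dim P) S" "z \<in> box_simplex S"
    using assms by (auto simp: box_polytope_def)
  then obtain t where "t < j" "z = lift (box_weight t)"
    using box_simplex_of_vertices[OF vertices_full_dim_subsimplex[OF S(1,2)]] by blast
  then show ?thesis
    by (simp add: deg_lift_box_weight box_deg_le)
qed

lemma mu_hole_P: "mu_hole P = j"
proof -
  have top: "lift (box_weight (j - 1)) \<in> box_polytope P"
    unfolding box_polytope_def
  proof
    have "lift (box_weight (j - 1)) \<in> box_simplex P"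
      using two_le_j by (simp add: box_simplex_of_vertices[OF vertices_P])
    then show "lift (box_weight (j - 1)) \<in> \<Union> {box_simplex S |S. S \<subseteq> P \<and> empty_simplex (aff_dim P) S}"
      using empty_simplex_P aff_dim_P by auto
    show "lift (box_weight (j - 1)) \<notin> nat_span ((\<lambda>x. (x, 1)) ` lattice_pts P)"
      using two_le_j by (intro lift_box_weight_notin_nat_span) auto
  qed
  have "Max (deg ` box_polytope P) = j"
  proof (rule Max_image_eqI[OF deg_le_of_mem_box_polytope_P top])
    show "deg (lift (box_weight (j - 1))) = j"
      using two_le_j by (simp add: deg_lift_box_weight box_deg_def)
  qed
  with top show ?thesis
    unfolding mu_hole_def by auto
qed

section \<open>Integer decomposition property of the dilations\<close>

lemma ksum_lattice_pts_dil_P: "ksum K (lattice_pts (dil n P)) = point ` ksum K (lattice_weights n)"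
  unfolding lattice_pts_dil_P by (rule ksum_image) (simp_all add: point_add point_zero)

lemma decomp_at_dil_P_iff:
  "decomp_at K (dil n P) \<longleftrightarrow> lattice_weights (K * n) \<subseteq> ksum K (lattice_weights n)"
proof
  assume decomp: "decomp_at K (dil n P)"
  show "lattice_weights (K * n) \<subseteq> ksum K (lattice_weights n)"
  proof
    fix \<mu> assume \<mu>: "\<mu> \<in> lattice_weights (K * n)"
    then have "point \<mu> \<in> point ` ksum K (lattice_weights n)"
      using decomp unfolding decomp_at_def dil_dil ksum_lattice_pts_dil_P
      unfolding lattice_pts_dil_P by blast
    then obtain \<nu> where \<nu>: "\<nu> \<in> ksum K (lattice_weights n)" "point \<mu> = point \<nu>"
      by blast
    have "sum \<nu> UNIV = real K * real n"
      by (rule sum_ksum[OF _ \<nu>(1)]) (simp add: lattice_weights_def)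
    then have "\<mu> = \<nu>"
      using \<mu> \<nu>(2) point_inj by (simp add: lattice_weights_def)
    with \<nu>(1) show "\<mu> \<in> ksum K (lattice_weights n)"
      by simp
  qed
next
  assume "lattice_weights (K * n) \<subseteq> ksum K (lattice_weights n)"
  then show "decomp_at K (dil n P)"
    unfolding decomp_at_def dil_dil ksum_lattice_pts_dil_P unfolding lattice_pts_dil_P by blast
qed

lemma lattice_weights_mult_subset_ksum:
  assumes "j \<le> n" "1 \<le> K"
  shows "lattice_weights (K * n) \<subseteq> ksum K (lattice_weights n)"
proof
  fix \<mu> assume "\<mu> \<in> lattice_weights (K * n)"
  then obtain t q where tq: "t < j" "\<mu> = (\<lambda>p. box_weight t p + real (q p))"
      "K * n = box_deg t + sum q UNIV"
    by (rule lattice_weights_decomp)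
  have "box_deg t \<le> n"
    using box_deg_le[OF tq(1)] assms(1) by simp
  moreover have "n \<le> K * n"
    using assms(2) by simp
  ultimately have "n - box_deg t \<le> sum q UNIV"
    using tq(3) by linarith
  then obtain q1 where q1: "\<forall>p. q1 p \<le> q p" "sum q1 UNIV = n - box_deg t"
    using ex_fun_le_with_sum by blast
  define q2 where "q2 p = q p - q1 p" for p
  have "sum q UNIV = sum q1 UNIV + sum q2 UNIV"
    using q1(1) by (simp add: q2_def flip: sum.distrib)
  then have "sum q2 UNIV = (K - 1) * n"
    using tq(3) q1(2) \<open>box_deg t \<le> n\<close> by (simp add: diff_mult_distrib)
  then have "(\<lambda>p. real (q2 p)) \<in> ksum (K - 1) (lattice_weights n)"
    using nat_in_lattice_weights by (intro of_nat_fun_in_ksum) auto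
  moreover have "(\<lambda>p. box_weight t p + real (q1 p)) \<in> lattice_weights n"
    using box_plus_nat_in_lattice_weights[OF tq(1), of q1] q1(2) \<open>box_deg t \<le> n\<close> by simp
  moreover have "\<mu> = (\<lambda>p. box_weight t p + real (q1 p)) + (\<lambda>p. real (q2 p))"
    using tq(2) q1(1) by (auto simp: q2_def fun_eq_iff of_nat_diff)
  ultimately have "\<mu> \<in> ksum (Suc (K - 1)) (lattice_weights n)"
    by auto
  then show "\<mu> \<in> ksum K (lattice_weights n)"
    using assms(2) by simp
qed

lemma IDP_dil_P: "j \<le> n \<Longrightarrow> IDP (dil n P)"
  unfolding IDP_def decomp_at_dil_P_iff using lattice_weights_mult_subset_ksum by blast

lemma lattice_weights_origin:
  assumes "k < j" "\<mu> \<in> lattice_weights k"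
  shows "\<mu> None \<in> \<int> \<or> 2 / real j \<le> \<mu> None"
proof -
  obtain t q where tq: "t < j" "\<mu> = (\<lambda>p. box_weight t p + real (q p))" "k = box_deg t + sum q UNIV"
    using assms(2) by (rule lattice_weights_decomp)
  show ?thesis
  proof (cases "t = 0")
    case False
    then have "t + 2 \<le> j"
      using tq(3) assms(1) by (simp add: box_deg_def)
    then have "2 / real j \<le> (real j - real t) / real j"
      using j_pos by (simp add: divide_right_mono)
    then show ?thesis
      using tq(2) False by (simp add: box_weight_def)
  qed (use tq(2) in simp)
qed

lemma ksum_lattice_weights_origin:
  assumes "k < j" "y \<in> ksum m (lattice_weights k)"
  shows "(\<forall>p. 0 \<le> y p) \<and> (y None \<in> \<int> \<or> 2 / real j \<le> y None)"
  using assms(2)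
proof (induction m arbitrary: y)
  case (Suc m)
  then obtain x z where xz: "y = x + z" "x \<in> lattice_weights k" "z \<in> ksum m (lattice_weights k)"
    by auto
  have x: "\<forall>p. 0 \<le> x p" "x None \<in> \<int> \<or> 2 / real j \<le> x None"
    using xz(2) lattice_weights_origin[OF assms(1)] by (auto simp: lattice_weights_def cone_weights_def)
  have z: "\<forall>p. 0 \<le> z p" "z None \<in> \<int> \<or> 2 / real j \<le> z None"
    using Suc.IH xz(3) by blast+
  have "y None \<in> \<int> \<or> 2 / real j \<le> y None"
    using x z xz(1) by (auto simp: add_increasing add_increasing2)
  then show ?case
    using x(1) z(1) xz(1) by (simp add: add_nonneg_nonneg)
qed simp

lemma not_very_ample_dil_P:
  assumes "1 \<le> k" "k < j"
  shows "\<not> very_ample (dil k P)"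
proof
  assume "very_ample (dil k P)"
  then obtain k0 where k0: "\<And>K. k0 \<le> K \<Longrightarrow> 1 \<le> K \<Longrightarrow> decomp_at K (dil k P)"
    unfolding very_ample_def by blast
  define K where "K = max k0 j"
  have "j \<le> K"
    by (simp add: K_def)
  also have "K \<le> K * k"
    using assms(1) by simp
  finally have "j \<le> K * k" .
  define \<mu> where "\<mu> = (\<lambda>p. box_weight (j - 1) p + real (if p = Some a then K * k - j else 0))"
  have "\<mu> \<in> lattice_weights (K * k)"
    using box_plus_nat_in_lattice_weights[of "j - 1" "\<lambda>p. if p = Some a then K * k - j else 0"]
      two_le_j \<open>j \<le> K * k\<close> by (simp add: \<mu>_def box_deg_def)
  moreover have "\<mu> \<notin> ksum K (lattice_weights k)"
  proof
    assume "\<mu> \<in> ksum K (lattice_weights k)"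
    then have "\<mu> None \<in> \<int> \<or> 2 / real j \<le> \<mu> None"
      using ksum_lattice_weights_origin assms(2) by blast
    moreover have "\<mu> None = 1 / real j"
      using two_le_j by (simp add: \<mu>_def box_weight_def of_nat_diff)
    moreover have "1 / real j < 2 / real j"
      using j_pos by (simp add: divide_strict_right_mono)
    ultimately show False
      using two_le_j by (auto simp: not_Ints_if_between_0_1)
  qed
  ultimately have "\<not> decomp_at K (dil k P)"
    unfolding decomp_at_dil_P_iff by blast
  then show False
    using k0[of K] two_le_j unfolding K_def by linarith
qed

lemma very_ample_dil_P_iff: "0 < k \<Longrightarrow> very_ample (dil k P) \<longleftrightarrow> j \<le> k"
  using IDP_dil_P[of k] IDP_imp_very_ample not_very_ample_dil_P[of k] by (cases "j \<le> k") auto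

lemma IDP_dil_P_iff: "0 < k \<Longrightarrow> IDP (dil k P) \<longleftrightarrow> j \<le> k"
  using IDP_dil_P IDP_imp_very_ample very_ample_dil_P_iff by blast

lemma mu_va_P: "mu_va P = j"
  unfolding mu_va_def using two_le_j by (intro Least_pos_eqI very_ample_dil_P_iff) auto

lemma mu_midp_P: "mu_midp P = j"
  unfolding mu_midp_def using two_le_j by (intro Least_pos_eqI IDP_dil_P_iff) auto

lemma mu_idp_P: "mu_idp P = j"
proof -
  have "(\<forall>n\<ge>k. IDP (dil n P)) \<longleftrightarrow> j \<le> k" if "0 < k" for k
    using that IDP_dil_P IDP_dil_P_iff[of k] by auto
  then show ?thesis
    unfolding mu_idp_def using two_le_j by (intro Least_pos_eqI) auto
qed

section \<open>Ehrhart series\<close>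

lemma lattice_weights_eq_image:
  "lattice_weights n = (\<lambda>(t, q) p. box_weight t p + real (q p)) `
     (SIGMA t:{t. t < j \<and> box_deg t \<le> n}. {q. sum q UNIV = n - box_deg t})"
proof (intro set_eqI iffI)
  fix \<mu> assume "\<mu> \<in> lattice_weights n"
  then obtain t q where "t < j" "\<mu> = (\<lambda>p. box_weight t p + real (q p))" "n = box_deg t + sum q UNIV"
    by (rule lattice_weights_decomp)
  then show "\<mu> \<in> (\<lambda>(t, q) p. box_weight t p + real (q p)) `
      (SIGMA t:{t. t < j \<and> box_deg t \<le> n}. {q. sum q UNIV = n - box_deg t})"
    by force
next
  fix \<mu> assume "\<mu> \<in> (\<lambda>(t, q) p. box_weight t p + real (q p)) `
      (SIGMA t:{t. t < j \<and> box_deg t \<le> n}. {q. sum q UNIV = n - box_deg t})"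
  then obtain t q where "t < j" "box_deg t \<le> n" "sum q UNIV = n - box_deg t"
      "\<mu> = (\<lambda>p. box_weight t p + real (q p))"
    by auto
  then show "\<mu> \<in> lattice_weights n"
    using box_plus_nat_in_lattice_weights[of t q] by simp
qed

lemma card_lattice_weights:
  "card (lattice_weights n) =
     (\<Sum>t<j. if box_deg t \<le> n then (n - box_deg t + CARD('n)) choose (n - box_deg t) else 0)"
proof -
  have "inj_on (\<lambda>(t, q) p. box_weight t p + real (q p))
      (SIGMA t:{t. t < j \<and> box_deg t \<le> n}. {q. sum q UNIV = n - box_deg t})"
    using box_decomp_unique by (intro inj_onI) auto
  then have "card (lattice_weights n) =
      card (SIGMA t:{t. t < j \<and> box_deg t \<le> n}. {q :: 'n option \<Rightarrow> nat. sum q UNIV = n - box_deg t})"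
    unfolding lattice_weights_eq_image by (rule card_image)
  also have "\<dots> = (\<Sum>t\<in>{t. t < j \<and> box_deg t \<le> n}. (n - box_deg t + CARD('n)) choose (n - box_deg t))"
    by (simp add: card_SigmaI finite_nat_funs_with_sum card_nat_funs_with_sum card_UNIV_option)
  also have "\<dots> = (\<Sum>t<j. if box_deg t \<le> n then (n - box_deg t + CARD('n)) choose (n - box_deg t) else 0)"
    by (simp add: sum.inter_filter[symmetric] lessThan_def Collect_conj_eq)
  finally show ?thesis .
qed

lemma card_lattice_pts_dil_P: "card (lattice_pts (dil n P)) = card (lattice_weights n)"
proof -
  have "inj_on point (lattice_weights n)"
    using point_inj by (intro inj_onI) (simp add: lattice_weights_def)
  then show ?thesis
    by (simp add: lattice_pts_dil_P card_image)
qed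

lemma ehrhart_series_P:
  "ehrhart_series P = (\<Sum>t<j. fps_X ^ box_deg t) * fps_neg_binomial (CARD('n) + 1)"
proof (rule fps_ext)
  fix n
  have "fps_nth (ehrhart_series P) n
      = (\<Sum>t<j. int (if box_deg t \<le> n then (n - box_deg t + CARD('n)) choose (n - box_deg t) else 0))"
    by (simp add: ehrhart_series_def card_lattice_pts_dil_P card_lattice_weights)
  also have "\<dots> = (\<Sum>t<j. fps_nth (fps_X ^ box_deg t * fps_neg_binomial (CARD('n) + 1)) n)"
    by (rule sum.cong) (auto simp: fps_X_power_mult_nth fps_neg_binomial_def)
  finally show "fps_nth (ehrhart_series P) n
      = fps_nth ((\<Sum>t<j. fps_X ^ box_deg t) * fps_neg_binomial (CARD('n) + 1)) n"
    by (simp add: sum_distrib_right fps_sum_nth)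
qed

lemma delta_P: "delta P i = (\<Sum>t<j. if i = box_deg t then 1 else 0)"
proof -
  have "nat (aff_dim P) + 1 = CARD('n) + 1"
    by (simp add: aff_dim_P)
  then have "delta P i = fps_nth ((\<Sum>t<j. fps_X ^ box_deg t) *
      (fps_neg_binomial (CARD('n) + 1) * (1 - fps_X) ^ (CARD('n) + 1))) i"
    unfolding delta_def ehrhart_series_P by (simp only: mult.assoc)
  also have "\<dots> = (\<Sum>t<j. if i = box_deg t then 1 else 0)"
    by (simp only: fps_neg_binomial_mult_one_minus_X_power mult_1_right) (simp add: fps_sum_nth)
  finally show ?thesis .
qed

lemma mu_Ehr_P: "mu_Ehr P = j"
  unfolding mu_Ehr_def
proof (rule Greatest_equality)
  have "(1::int) \<le> (\<Sum>t<j. if j = box_deg t then 1 else 0)"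
    using two_le_j member_le_sum[of "j - 1" "{..<j}" "\<lambda>t. if j = box_deg t then (1::int) else 0"]
    by (simp add: box_deg_def)
  then show "0 < j \<and> delta P j \<noteq> 0"
    using two_le_j by (simp add: delta_P)
next
  fix i assume "0 < i \<and> delta P i \<noteq> 0"
  then have "(\<Sum>t<j. if i = box_deg t then 1 else 0) \<noteq> (0::int)"
    by (simp add: delta_P)
  then obtain t where "t < j" "i = box_deg t"
    by (metis (mono_tags, lifting) lessThan_iff sum.neutral)
  then show "i \<le> j"
    using box_deg_le by simp
qed

end

theorem theorem2p1:
  fixes d j :: nat
  assumes "CARD('n::finite) = d" and "3 \<le> d" and "2 \<le> j" and "j \<le> d - 1"
  shows "\<exists>P :: (real^'n) set. empty_simplex (int d) P \<and>
           mu_va P = j \<and> mu_midp P = j \<and> mu_idp P = j \<and>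
           mu_Hilb P = j \<and> mu_hole P = j \<and> mu_Ehr P = j"
proof -
  fix a :: 'n
  have "j \<le> card (UNIV - {a})"
    using assms(1,4) by (simp add: card_Diff_singleton)
  then obtain J where J: "J \<subseteq> UNIV - {a}" "card J = j"
    by (meson obtain_subset_with_card_n)
  interpret cyclic_empty_simplex a J j
    using J assms(3) by unfold_locales auto
  show ?thesis
    using empty_simplex_P mu_va_P mu_midp_P mu_idp_P mu_Hilb_P mu_hole_P mu_Ehr_P assms(1) by blast
qed

end
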